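(* Let $T_0\subset\overline{\mathbb R}^X$ be an extended vector lattice, $T_0^+=\{x\in T_0:x\ge0\}$, and let $S:T_0\to\mathbb R$ be an $S$-integral. For $x\in T_0^+$ put $P(x):=\sup\{S(\varphi):\varphi\in T_0,\ 0\le\varphi\le x\}$ (a real number), and for $x\in T_0$ put $S^+(x):=P(x\vee0)-P((-x)\vee0)$, $S^-(x):=S^+(x)-S(x)$ and $|S|(x):=S^+(x)+S^-(x)$. Then $P(x_1+x_2)=P(x_1)+P(x_2)$ for $x_1,x_2\in T_0^+$, $S^+(x)=P(\varphi)-P(\psi)$ whenever $x=\varphi-\psi$ with $\varphi,\psi\in T_0^+$, and each of $S^+$, $S^-$ and $|S|$ is an $I$-integral on $T_0$; in particular $S=S^+-S^-$ is a difference of two $I$-integrals.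
   Context: Let $X$ be a nonempty set, $\overline{\mathbb R}=\mathbb R\cup\{-\infty,\infty\}$, $\overline{\mathbb R}^X$ the functions $X\to\overline{\mathbb R}$ with pointwise order, $\wedge$, $\vee$, $|\cdot|$. Addition convention: $(x+y)(t)=x(t)+y(t)$ when defined and $0$ where $\{x(t),y(t)\}=\{\infty,-\infty\}$; $x-y:=x+(-y)$; scalar multiples pointwise with $0\cdot(\pm\infty)=0$. An extended vector lattice is a set $T_0\subset\overline{\mathbb R}^X$ closed under real linear combinations, $\wedge$, $\vee$, and such that for $x,y\in T_0$ and any $c\in\overline{\mathbb R}$ the function equal to $x(t)+y(t)$ where defined and $c$ where $\{x(t),y(t)\}=\{\infty,-\infty\}$ is in $T_0$. $(x_n)\searrow0$ means pointwise nonincreasing with pointwise limit $0$. An $I$-integral on $T_0$ is a linear map $I:T_0\to\mathbb R$ with $I(x)\ge0$ for $x\ge0$ and $I(x_n)\to0$ whenever $(x_n)\subset T_0$, $(x_n)\searrow0$. An $S$-integral on $T_0$ is a map $S:T_0\to\mathbb R$ such that (S1) $S$ is linear; (S2) $(x_n)\subset T_0$, $(x_n)\searrow0$ implies $S(x_n)\to0$; (S3) there is a function $M:T_0^+\to\mathbb R$ with $M(\varphi)\le M(\psi)$ whenever $\varphi,\psi\in T_0^+$, $\varphi\le\psi$, and $|S(x)|\le M(|x|)$ for all $x\in T_0$. *)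

theory Defs
  imports "HOL-Library.Extended_Real"
begin

text \<open>Functions X -> extended reals, with the paper's addition convention:
  undefined sums (infinity plus minus infinity) are set to 0.\<close>

definition eadd :: "ereal \<Rightarrow> ereal \<Rightarrow> ereal" where
  "eadd a b = (if {a, b} = {\<infinity>, -\<infinity>} then 0 else a + b)"

definition fadd :: "('a \<Rightarrow> ereal) \<Rightarrow> ('a \<Rightarrow> ereal) \<Rightarrow> ('a \<Rightarrow> ereal)" where
  "fadd x y = (\<lambda>t. eadd (x t) (y t))"

definition fneg :: "('a \<Rightarrow> ereal) \<Rightarrow> ('a \<Rightarrow> ereal)" where
  "fneg x = (\<lambda>t. - x t)"

definition fsub :: "('a \<Rightarrow> ereal) \<Rightarrow> ('a \<Rightarrow> ereal) \<Rightarrow> ('a \<Rightarrow> ereal)" where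
  "fsub x y = fadd x (fneg y)"

text \<open>Real scalar multiple; note 0 * (+-infinity) = 0 in ereal.\<close>
definition fscale :: "real \<Rightarrow> ('a \<Rightarrow> ereal) \<Rightarrow> ('a \<Rightarrow> ereal)" where
  "fscale c x = (\<lambda>t. ereal c * x t)"

definition fabs :: "('a \<Rightarrow> ereal) \<Rightarrow> ('a \<Rightarrow> ereal)" where
  "fabs x = (\<lambda>t. \<bar>x t\<bar>)"

definition fzero :: "'a \<Rightarrow> ereal" where
  "fzero = (\<lambda>t. 0)"

definition ext_vector_lattice :: "('a \<Rightarrow> ereal) set \<Rightarrow> bool" where
  "ext_vector_lattice T0 \<longleftrightarrow>
     (\<forall>x\<in>T0. \<forall>y\<in>T0. \<forall>a b. fadd (fscale a x) (fscale b y) \<in> T0) \<and>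
     (\<forall>x\<in>T0. \<forall>y\<in>T0. inf x y \<in> T0 \<and> sup x y \<in> T0) \<and>
     (\<forall>x\<in>T0. \<forall>y\<in>T0. \<forall>c::ereal.
        (\<lambda>t. if {x t, y t} = {\<infinity>, -\<infinity>} then c else x t + y t) \<in> T0)"

definition nonneg_part :: "('a \<Rightarrow> ereal) set \<Rightarrow> ('a \<Rightarrow> ereal) set" where
  "nonneg_part T0 = {x \<in> T0. fzero \<le> x}"

definition decr_to_zero :: "(nat \<Rightarrow> 'a \<Rightarrow> ereal) \<Rightarrow> bool" where
  "decr_to_zero xs \<longleftrightarrow> (\<forall>n. xs (Suc n) \<le> xs n) \<and> (\<forall>t. (\<lambda>n. xs n t) \<longlonglongrightarrow> 0)"

definition linear_on :: "('a \<Rightarrow> ereal) set \<Rightarrow> (('a \<Rightarrow> ereal) \<Rightarrow> real) \<Rightarrow> bool" where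
  "linear_on T0 F \<longleftrightarrow>
     (\<forall>x\<in>T0. \<forall>y\<in>T0. F (fadd x y) = F x + F y) \<and>
     (\<forall>x\<in>T0. \<forall>c. F (fscale c x) = c * F x)"

definition I_integral :: "('a \<Rightarrow> ereal) set \<Rightarrow> (('a \<Rightarrow> ereal) \<Rightarrow> real) \<Rightarrow> bool" where
  "I_integral T0 I \<longleftrightarrow> linear_on T0 I \<and>
     (\<forall>x\<in>T0. fzero \<le> x \<longrightarrow> I x \<ge> 0) \<and>
     (\<forall>xs. (\<forall>n. xs n \<in> T0) \<and> decr_to_zero xs \<longrightarrow> (\<lambda>n. I (xs n)) \<longlonglongrightarrow> 0)"

definition S_integral :: "('a \<Rightarrow> ereal) set \<Rightarrow> (('a \<Rightarrow> ereal) \<Rightarrow> real) \<Rightarrow> bool" where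
  "S_integral T0 S \<longleftrightarrow> linear_on T0 S \<and>
     (\<forall>xs. (\<forall>n. xs n \<in> T0) \<and> decr_to_zero xs \<longrightarrow> (\<lambda>n. S (xs n)) \<longlonglongrightarrow> 0) \<and>
     (\<exists>M :: ('a \<Rightarrow> ereal) \<Rightarrow> real.
        (\<forall>\<phi>\<in>nonneg_part T0. \<forall>\<psi>\<in>nonneg_part T0. \<phi> \<le> \<psi> \<longrightarrow> M \<phi> \<le> M \<psi>) \<and>
        (\<forall>x\<in>T0. \<bar>S x\<bar> \<le> M (fabs x)))"

definition Ppart :: "('a \<Rightarrow> ereal) set \<Rightarrow> (('a \<Rightarrow> ereal) \<Rightarrow> real) \<Rightarrow> ('a \<Rightarrow> ereal) \<Rightarrow> real" where
  "Ppart T0 S x = Sup {S \<phi> | \<phi>. \<phi> \<in> T0 \<and> fzero \<le> \<phi> \<and> \<phi> \<le> x}"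

definition Splus :: "('a \<Rightarrow> ereal) set \<Rightarrow> (('a \<Rightarrow> ereal) \<Rightarrow> real) \<Rightarrow> ('a \<Rightarrow> ereal) \<Rightarrow> real" where
  "Splus T0 S x = Ppart T0 S (sup x fzero) - Ppart T0 S (sup (fneg x) fzero)"

definition Sminus :: "('a \<Rightarrow> ereal) set \<Rightarrow> (('a \<Rightarrow> ereal) \<Rightarrow> real) \<Rightarrow> ('a \<Rightarrow> ereal) \<Rightarrow> real" where
  "Sminus T0 S x = Splus T0 S x - S x"

definition Sabs :: "('a \<Rightarrow> ereal) set \<Rightarrow> (('a \<Rightarrow> ereal) \<Rightarrow> real) \<Rightarrow> ('a \<Rightarrow> ereal) \<Rightarrow> real" where
  "Sabs T0 S x = Splus T0 S x + Sminus T0 S x"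

end

theory Submission
  imports Defs
begin

text \<open>\<open>P(x)\<close> is finite because \<open>|S| \<le> M(|\<cdot>|)\<close> with \<open>M\<close> monotone. Its additivity rests on the
  Riesz decomposition: every \<open>0 \<le> \<phi> \<le> a + b\<close> splits as \<open>(\<phi> \<sqinter> a) + (\<phi> - \<phi> \<sqinter> a)\<close> with the
  summands in \<open>[0, a]\<close> and \<open>[0, b]\<close>. Additivity and positive homogeneity of \<open>P\<close> make \<open>S\<^sup>+\<close>
  independent of the representation \<open>x = \<phi> - \<psi>\<close>, hence linear. For continuity, let \<open>x\<^sub>n \<searrow> 0\<close> and
  let \<open>y \<le> x\<^sub>0\<close> nearly attain \<open>P(x\<^sub>0)\<close>; decomposing \<open>y \<le> x\<^sub>n + (x\<^sub>0 - x\<^sub>n)\<close> gives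
  \<open>P(x\<^sub>n) = P(x\<^sub>0) - P(x\<^sub>0 - x\<^sub>n) \<le> P(x\<^sub>0) - S(y) + S(y \<sqinter> x\<^sub>n)\<close>, and \<open>S(y \<sqinter> x\<^sub>n) \<to> 0\<close> because
  \<open>y \<sqinter> x\<^sub>n \<searrow> 0\<close>.\<close>

lemma eadd_eq_if:
  "eadd a b = (if (a = \<infinity> \<and> b = -\<infinity>) \<or> (a = -\<infinity> \<and> b = \<infinity>) then 0 else a + b)"
  unfolding eadd_def doubleton_eq_iff by auto

lemma eadd_nonneg: "0 \<le> a \<Longrightarrow> 0 \<le> b \<Longrightarrow> eadd a b = a + b"
  by (cases a; cases b) (auto simp: eadd_eq_if)

lemma eadd_eadd_uminus_cancel: "0 \<le> q \<Longrightarrow> q \<le> p \<Longrightarrow> eadd q (eadd p (- q)) = p"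
  by (cases q; cases p) (auto simp: eadd_eq_if)

lemma eadd_uminus_nonneg_cancel:
  "0 \<le> b \<Longrightarrow> b \<le> a \<Longrightarrow> 0 \<le> eadd a (- b) \<and> eadd b (eadd a (- b)) = a"
  by (cases a; cases b) (auto simp: eadd_eq_if)

lemma eadd_uminus_min_bounds:
  "0 \<le> p \<Longrightarrow> 0 \<le> a \<Longrightarrow> 0 \<le> b \<Longrightarrow> p \<le> a + b \<Longrightarrow>
   0 \<le> eadd p (- min p a) \<and> eadd p (- min p a) \<le> b"
  by (cases p; cases a; cases b) (auto simp: eadd_eq_if min_def)

lemma eadd_pos_part_diff_eq:
  "0 \<le> f \<Longrightarrow> 0 \<le> g \<Longrightarrow>
   eadd (max (eadd f (- g)) 0) g = eadd (max (- eadd f (- g)) 0) f"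
  by (cases f; cases g) (auto simp: eadd_eq_if max_def)

lemma eadd_eq_pos_parts_minus_neg_parts:
  "eadd a b = eadd (eadd (max a 0) (max b 0)) (- eadd (max (- a) 0) (max (- b) 0))"
  by (cases a; cases b) (auto simp: eadd_eq_if max_def)

lemma ereal_mult_max_zero: "0 \<le> c \<Longrightarrow> max (ereal c * a) 0 = ereal c * max a 0"
  by (cases a) (auto simp: max_def mult_le_0_iff zero_le_mult_iff)

lemma fadd_nonneg: "fzero \<le> x \<Longrightarrow> fzero \<le> y \<Longrightarrow> fadd x y = (\<lambda>t. x t + y t)"
  by (auto simp: fadd_def fzero_def le_fun_def eadd_nonneg)

lemma fneg_fneg [simp]: "fneg (fneg x) = x"
  by (simp add: fneg_def)

lemma fneg_fscale: "fneg (fscale c x) = fscale c (fneg x)"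
  by (simp add: fneg_def fscale_def)

lemma fscale_neg: "fscale c x = fscale (- c) (fneg x)"
  by (simp add: fun_eq_iff fneg_def fscale_def uminus_ereal.simps(1)[symmetric]
      del: uminus_ereal.simps)

lemma sup_fscale_fzero: "0 \<le> c \<Longrightarrow> sup (fscale c x) fzero = fscale c (sup x fzero)"
  by (simp add: fun_eq_iff fscale_def fzero_def sup_max ereal_mult_max_zero)

lemma fscale_zero: "fscale 0 x = fzero"
  by (simp add: fscale_def fzero_def zero_ereal_def[symmetric])

lemma fscale_nonneg: "0 \<le> c \<Longrightarrow> fzero \<le> x \<Longrightarrow> fzero \<le> fscale c x"
  by (auto simp: fscale_def fzero_def le_fun_def intro: mult_nonneg_nonneg)

lemma fscale_mono: "0 \<le> c \<Longrightarrow> x \<le> y \<Longrightarrow> fscale c x \<le> fscale c y"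
  by (auto simp: fscale_def le_fun_def intro: ereal_mult_left_mono)

lemma fscale_inverse: "c \<noteq> 0 \<Longrightarrow> fscale (1 / c) (fscale c x) = x"
  by (simp add: fun_eq_iff fscale_def mult.assoc[symmetric])

lemma decr_to_zero_decseq: "decr_to_zero xs \<Longrightarrow> decseq (\<lambda>n. xs n t)"
  by (rule decseq_SucI) (auto simp: decr_to_zero_def le_fun_def)

lemma decr_to_zero_nonneg:
  assumes dec: "decr_to_zero xs" shows "fzero \<le> xs n"
  unfolding le_fun_def fzero_def
proof
  fix t
  have "(\<lambda>m. xs m t) \<longlonglongrightarrow> 0"
    using dec by (simp add: decr_to_zero_def)
  moreover have "\<forall>m\<ge>n. xs m t \<le> xs n t"
    using decr_to_zero_decseq[OF dec] by (simp add: decseq_def)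
  ultimately show "0 \<le> xs n t"
    by (intro LIMSEQ_le_const2) auto
qed

lemma decr_to_zero_le_first:
  assumes "decr_to_zero xs" shows "xs n \<le> xs 0"
  using decr_to_zero_decseq[OF assms] by (simp add: le_fun_def decseq_def)

lemma decr_to_zero_inf:
  assumes dec: "decr_to_zero xs" and y: "fzero \<le> y"
  shows "decr_to_zero (\<lambda>n. inf y (xs n))"
  unfolding decr_to_zero_def
proof (intro conjI allI)
  show "inf y (xs (Suc n)) \<le> inf y (xs n)" for n
    using dec by (meson decr_to_zero_def inf_mono order_refl)
  show "(\<lambda>n. inf y (xs n) t) \<longlonglongrightarrow> 0" for t
  proof (rule tendsto_sandwich[of "\<lambda>n. 0" _ _ "\<lambda>n. xs n t"])
    show "\<forall>\<^sub>F n in sequentially. 0 \<le> inf y (xs n) t"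
      using y decr_to_zero_nonneg[OF dec] by (simp add: le_fun_def fzero_def)
  qed (use dec in \<open>auto simp: decr_to_zero_def\<close>)
qed

lemma I_integral_add:
  assumes I: "I_integral T0 I" and J: "I_integral T0 J"
  shows "I_integral T0 (\<lambda>x. I x + J x)"
  unfolding I_integral_def linear_on_def
proof (intro conjI ballI allI impI)
  show "(\<lambda>n. I (xs n) + J (xs n)) \<longlonglongrightarrow> 0" if "(\<forall>n. xs n \<in> T0) \<and> decr_to_zero xs" for xs
    using that I J tendsto_add_zero[of "\<lambda>n. I (xs n)" _ "\<lambda>n. J (xs n)"]
    unfolding I_integral_def by simp
qed (use I J in \<open>auto simp: I_integral_def linear_on_def algebra_simps\<close>)

lemma I_integral_diff:
  assumes I: "I_integral T0 I" and F: "linear_on T0 F"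
    and F_cont: "\<forall>xs. (\<forall>n. xs n \<in> T0) \<and> decr_to_zero xs \<longrightarrow> (\<lambda>n. F (xs n)) \<longlonglongrightarrow> 0"
    and F_le: "\<forall>x\<in>T0. fzero \<le> x \<longrightarrow> F x \<le> I x"
  shows "I_integral T0 (\<lambda>x. I x - F x)"
  unfolding I_integral_def linear_on_def
proof (intro conjI ballI allI impI)
  show "(\<lambda>n. I (xs n) - F (xs n)) \<longlonglongrightarrow> 0" if "(\<forall>n. xs n \<in> T0) \<and> decr_to_zero xs" for xs
    using that I F_cont tendsto_diff[of "\<lambda>n. I (xs n)" 0 _ "\<lambda>n. F (xs n)" 0]
    unfolding I_integral_def by simp
qed (use I F F_le in \<open>auto simp: I_integral_def linear_on_def algebra_simps\<close>)

locale extended_vector_lattice =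
  fixes T0 :: "('a \<Rightarrow> ereal) set"
  assumes ext_vector_lattice: "ext_vector_lattice T0"
begin

lemma lincomb_mem: "x \<in> T0 \<Longrightarrow> y \<in> T0 \<Longrightarrow> fadd (fscale a x) (fscale b y) \<in> T0"
  using ext_vector_lattice unfolding ext_vector_lattice_def by blast

lemma inf_mem: "x \<in> T0 \<Longrightarrow> y \<in> T0 \<Longrightarrow> inf x y \<in> T0"
  using ext_vector_lattice unfolding ext_vector_lattice_def by blast

lemma sup_mem: "x \<in> T0 \<Longrightarrow> y \<in> T0 \<Longrightarrow> sup x y \<in> T0"
  using ext_vector_lattice unfolding ext_vector_lattice_def by blast

lemma fadd_mem: "x \<in> T0 \<Longrightarrow> y \<in> T0 \<Longrightarrow> fadd x y \<in> T0"
  using lincomb_mem[of x y 1 1] by (simp add: fscale_def)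

lemma fscale_mem: "x \<in> T0 \<Longrightarrow> fscale c x \<in> T0"
  using lincomb_mem[of x x c 0]
  by (simp add: fscale_def fadd_def eadd_eq_if zero_ereal_def[symmetric])

lemma fzero_mem: "x \<in> T0 \<Longrightarrow> fzero \<in> T0"
  using fscale_mem[of x 0] by (simp add: fscale_def fzero_def zero_ereal_def[symmetric])

lemma fneg_mem: "x \<in> T0 \<Longrightarrow> fneg x \<in> T0"
  using fscale_mem[of x "-1"] fscale_neg[of "-1" x] by (simp add: fscale_def)

lemma fsub_mem: "x \<in> T0 \<Longrightarrow> y \<in> T0 \<Longrightarrow> fsub x y \<in> T0"
  by (simp add: fsub_def fadd_mem fneg_mem)

lemma nonneg_partI: "x \<in> T0 \<Longrightarrow> fzero \<le> x \<Longrightarrow> x \<in> nonneg_part T0"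
  by (simp add: nonneg_part_def)

lemma nonneg_partD: "x \<in> nonneg_part T0 \<Longrightarrow> x \<in> T0 \<and> fzero \<le> x"
  by (simp add: nonneg_part_def)

lemma pos_part_mem: "x \<in> T0 \<Longrightarrow> sup x fzero \<in> nonneg_part T0"
  by (simp add: nonneg_partI sup_mem fzero_mem)

lemma neg_part_mem: "x \<in> T0 \<Longrightarrow> sup (fneg x) fzero \<in> nonneg_part T0"
  by (simp add: pos_part_mem fneg_mem)

lemma fadd_nonneg_part:
  assumes "x \<in> nonneg_part T0" and "y \<in> nonneg_part T0"
  shows "fadd x y \<in> nonneg_part T0"
proof (rule nonneg_partI)
  show "fadd x y \<in> T0"
    using assms by (simp add: nonneg_part_def fadd_mem)
  show "fzero \<le> fadd x y"
    using assms by (auto simp: nonneg_part_def fadd_nonneg fzero_def le_fun_def)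
qed

lemma fscale_nonneg_part: "0 \<le> c \<Longrightarrow> x \<in> nonneg_part T0 \<Longrightarrow> fscale c x \<in> nonneg_part T0"
  by (simp add: nonneg_part_def fscale_mem fscale_nonneg)

end

locale S_integral_on_lattice = extended_vector_lattice +
  fixes S :: "('a \<Rightarrow> ereal) \<Rightarrow> real"
  assumes S_integral: "S_integral T0 S"
begin

abbreviation P :: "('a \<Rightarrow> ereal) \<Rightarrow> real" where
  "P \<equiv> Ppart T0 S"

lemma S_linear: "linear_on T0 S"
  using S_integral by (simp add: S_integral_def)

lemma S_fadd: "x \<in> T0 \<Longrightarrow> y \<in> T0 \<Longrightarrow> S (fadd x y) = S x + S y"
  using S_linear by (simp add: linear_on_def)

lemma S_fscale: "x \<in> T0 \<Longrightarrow> S (fscale c x) = c * S x"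
  using S_linear by (simp add: linear_on_def)

lemma S_fzero: "fzero \<in> T0 \<Longrightarrow> S fzero = 0"
  using S_fscale[of fzero 0] by (simp add: fscale_zero)

lemma S_tendsto_zero: "(\<And>n. xs n \<in> T0) \<Longrightarrow> decr_to_zero xs \<Longrightarrow> (\<lambda>n. S (xs n)) \<longlonglongrightarrow> 0"
  using S_integral by (simp add: S_integral_def)

lemma bdd_above_S_interval:
  assumes x: "x \<in> nonneg_part T0"
  shows "bdd_above {S \<phi> | \<phi>. \<phi> \<in> T0 \<and> fzero \<le> \<phi> \<and> \<phi> \<le> x}"
proof -
  obtain M :: "('a \<Rightarrow> ereal) \<Rightarrow> real" where
    M_mono: "\<forall>\<phi>\<in>nonneg_part T0. \<forall>\<psi>\<in>nonneg_part T0. \<phi> \<le> \<psi> \<longrightarrow> M \<phi> \<le> M \<psi>" and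
    M_bound: "\<forall>x\<in>T0. \<bar>S x\<bar> \<le> M (fabs x)"
    using S_integral unfolding S_integral_def by blast
  have "S \<phi> \<le> M x" if "\<phi> \<in> T0" "fzero \<le> \<phi>" "\<phi> \<le> x" for \<phi>
  proof -
    have "fabs \<phi> = \<phi>"
      using that(2) by (auto simp: fabs_def fzero_def le_fun_def)
    then have "S \<phi> \<le> M \<phi>"
      using M_bound that(1) by force
    also have "\<dots> \<le> M x"
      using M_mono that x by (simp add: nonneg_part_def)
    finally show ?thesis .
  qed
  then show ?thesis
    by (intro bdd_aboveI[of _ "M x"]) auto
qed

lemma S_le_P:
  "x \<in> nonneg_part T0 \<Longrightarrow> \<phi> \<in> T0 \<Longrightarrow> fzero \<le> \<phi> \<Longrightarrow> \<phi> \<le> x \<Longrightarrow> S \<phi> \<le> P x"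
  unfolding Ppart_def by (rule cSup_upper) (use bdd_above_S_interval in auto)

lemma P_le:
  assumes "x \<in> nonneg_part T0"
    and "\<And>\<phi>. \<phi> \<in> T0 \<Longrightarrow> fzero \<le> \<phi> \<Longrightarrow> \<phi> \<le> x \<Longrightarrow> S \<phi> \<le> c"
  shows "P x \<le> c"
  unfolding Ppart_def
  by (rule cSup_least) (use assms in \<open>auto simp: nonneg_part_def intro: fzero_mem\<close>)

lemma P_approx:
  assumes x: "x \<in> nonneg_part T0" and e: "0 < e"
  obtains y where "y \<in> T0" "fzero \<le> y" "y \<le> x" "P x - e < S y"
proof -
  have "\<not> P x \<le> P x - e"
    using e by simp
  then show ?thesis
    using that P_le[OF x, of "P x - e"] by force
qed

lemma S_le_P_self: "x \<in> nonneg_part T0 \<Longrightarrow> S x \<le> P x"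
  by (simp add: S_le_P nonneg_part_def)

lemma P_nonneg:
  assumes x: "x \<in> nonneg_part T0" shows "0 \<le> P x"
proof -
  have "fzero \<in> T0"
    using fzero_mem nonneg_partD[OF x] by blast
  then show ?thesis
    using S_le_P[OF x _ order_refl] S_fzero x by (simp add: nonneg_part_def)
qed

lemma P_fzero: "fzero \<in> T0 \<Longrightarrow> P fzero = 0"
  using P_le[of fzero 0] P_nonneg[of fzero] S_fzero by (force simp: nonneg_part_def)

lemma S_le_S_inf_add_P:
  assumes a: "a \<in> nonneg_part T0" and b: "b \<in> nonneg_part T0"
    and \<phi>: "\<phi> \<in> T0" "fzero \<le> \<phi>" "\<phi> \<le> fadd a b"
  shows "S \<phi> \<le> S (inf \<phi> a) + P b"
proof -
  define r where "r = fsub \<phi> (inf \<phi> a)"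
  have r_apply: "r t = eadd (\<phi> t) (- min (\<phi> t) (a t))" for t
    by (simp add: r_def fsub_def fadd_def fneg_def inf_min)
  have pointwise: "0 \<le> \<phi> t" "0 \<le> a t" "0 \<le> b t" "\<phi> t \<le> a t + b t" for t
    using \<phi> a b by (auto simp: nonneg_part_def fadd_nonneg fzero_def le_fun_def)
  have inf_mem': "inf \<phi> a \<in> T0"
    using \<phi>(1) a by (simp add: nonneg_part_def inf_mem)
  have r_mem: "r \<in> T0"
    using \<phi>(1) inf_mem' by (simp add: r_def fsub_mem)
  have "fzero \<le> r" "r \<le> b"
    using eadd_uminus_min_bounds[OF pointwise] by (auto simp: fzero_def le_fun_def r_apply)
  then have "S r \<le> P b"
    using S_le_P[OF b r_mem] by simp
  moreover have "fadd (inf \<phi> a) r = \<phi>"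
    using eadd_eadd_uminus_cancel pointwise(1,2)
    by (simp add: fun_eq_iff fadd_def r_apply inf_min)
  then have "S \<phi> = S (inf \<phi> a) + S r"
    using S_fadd[OF inf_mem' r_mem] by simp
  ultimately show ?thesis
    by simp
qed

lemma P_fadd:
  assumes a: "a \<in> nonneg_part T0" and b: "b \<in> nonneg_part T0"
  shows "P (fadd a b) = P a + P b"
proof (rule antisym)
  have ab: "fadd a b \<in> nonneg_part T0"
    using a b by (rule fadd_nonneg_part)
  show "P (fadd a b) \<le> P a + P b"
  proof (rule P_le[OF ab])
    fix \<phi> assume \<phi>: "\<phi> \<in> T0" "fzero \<le> \<phi>" "\<phi> \<le> fadd a b"
    have "S (inf \<phi> a) \<le> P a"
      using S_le_P[OF a] \<phi> a by (simp add: nonneg_part_def inf_mem)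
    then show "S \<phi> \<le> P a + P b"
      using S_le_S_inf_add_P[OF a b \<phi>] by simp
  qed
  have "S \<phi> + S \<psi> \<le> P (fadd a b)"
    if \<phi>: "\<phi> \<in> T0" "fzero \<le> \<phi>" "\<phi> \<le> a" and \<psi>: "\<psi> \<in> T0" "fzero \<le> \<psi>" "\<psi> \<le> b"
    for \<phi> \<psi>
  proof -
    have "fadd \<phi> \<psi> \<le> fadd a b"
      using \<phi> \<psi> a b by (auto simp: nonneg_part_def fadd_nonneg le_fun_def intro: add_mono)
    moreover have "fzero \<le> fadd \<phi> \<psi>"
      using \<phi> \<psi> by (auto simp: fadd_nonneg fzero_def le_fun_def)
    ultimately show ?thesis
      using S_le_P[OF ab fadd_mem[OF \<phi>(1) \<psi>(1)]] S_fadd[OF \<phi>(1) \<psi>(1)] by simp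
  qed
  then have "P a \<le> P (fadd a b) - S \<psi>" if "\<psi> \<in> T0" "fzero \<le> \<psi>" "\<psi> \<le> b" for \<psi>
    using that by (intro P_le[OF a]) (simp add: algebra_simps)
  then have "P b \<le> P (fadd a b) - P a"
    by (intro P_le[OF b]) (simp add: algebra_simps)
  then show "P a + P b \<le> P (fadd a b)"
    by simp
qed

lemma Splus_fsub:
  assumes x: "x \<in> T0" and \<phi>: "\<phi> \<in> nonneg_part T0" and \<psi>: "\<psi> \<in> nonneg_part T0"
    and x_eq: "x = fsub \<phi> \<psi>"
  shows "Splus T0 S x = P \<phi> - P \<psi>"
proof -
  have "fadd (sup x fzero) \<psi> = fadd (sup (fneg x) fzero) \<phi>"
    using \<phi> \<psi> eadd_pos_part_diff_eq
    by (auto simp: nonneg_part_def fun_eq_iff x_eq fsub_def fadd_def fneg_def fzero_def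
        le_fun_def sup_max)
  then have "P (sup x fzero) + P \<psi> = P (sup (fneg x) fzero) + P \<phi>"
    using P_fadd[OF pos_part_mem[OF x] \<psi>] P_fadd[OF neg_part_mem[OF x] \<phi>] by simp
  then show ?thesis
    by (simp add: Splus_def)
qed

lemma Splus_nonneg_part: "x \<in> nonneg_part T0 \<Longrightarrow> Splus T0 S x = P x"
  using Splus_fsub[of x x fzero] fzero_mem P_fzero
  by (auto simp: nonneg_part_def fsub_def fadd_def fneg_def fzero_def eadd_eq_if)

lemma P_fscale_ge:
  assumes c: "0 < c" and x: "x \<in> nonneg_part T0"
  shows "c * P x \<le> P (fscale c x)"
proof -
  have cx: "fscale c x \<in> nonneg_part T0"
    using c x by (simp add: fscale_nonneg_part)
  have "S \<phi> \<le> P (fscale c x) / c" if "\<phi> \<in> T0" "fzero \<le> \<phi>" "\<phi> \<le> x" for \<phi>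
  proof -
    have "c * S \<phi> \<le> P (fscale c x)"
      using S_le_P[OF cx fscale_mem fscale_nonneg fscale_mono] S_fscale that c by simp
    then show ?thesis
      using c by (simp add: field_simps)
  qed
  then have "P x \<le> P (fscale c x) / c"
    by (rule P_le[OF x])
  then show ?thesis
    using c by (simp add: field_simps)
qed

lemma P_fscale:
  assumes c: "0 \<le> c" and x: "x \<in> nonneg_part T0"
  shows "P (fscale c x) = c * P x"
proof (cases "c = 0")
  case True
  moreover have "fzero \<in> T0"
    using fzero_mem nonneg_partD[OF x] by blast
  ultimately show ?thesis
    by (simp add: fscale_zero P_fzero)
next
  case False
  with c have "0 < c"
    by simp
  then have "(1 / c) * P (fscale c x) \<le> P x"
    using P_fscale_ge[of "1 / c" "fscale c x"] fscale_inverse[of c x] x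
    by (simp add: fscale_nonneg_part)
  then show ?thesis
    using P_fscale_ge[OF \<open>0 < c\<close> x] \<open>0 < c\<close> by (simp add: field_simps)
qed

lemma Splus_fadd:
  assumes x: "x \<in> T0" and y: "y \<in> T0"
  shows "Splus T0 S (fadd x y) = Splus T0 S x + Splus T0 S y"
proof -
  define u where "u = fadd (sup x fzero) (sup y fzero)"
  define v where "v = fadd (sup (fneg x) fzero) (sup (fneg y) fzero)"
  have u: "u \<in> nonneg_part T0" and v: "v \<in> nonneg_part T0"
    using x y by (simp_all add: u_def v_def fadd_nonneg_part pos_part_mem neg_part_mem)
  have "fadd x y = fsub u v"
    by (simp add: fun_eq_iff u_def v_def fsub_def fadd_def fneg_def fzero_def sup_max
        eadd_eq_pos_parts_minus_neg_parts[of "x _" "y _"])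
  then have "Splus T0 S (fadd x y) = P u - P v"
    using Splus_fsub[OF fadd_mem[OF x y] u v] by simp
  then show ?thesis
    using P_fadd pos_part_mem neg_part_mem x y by (simp add: u_def v_def Splus_def)
qed

lemma Splus_fneg: "Splus T0 S (fneg x) = - Splus T0 S x"
  by (simp add: Splus_def)

lemma Splus_fscale:
  assumes x: "x \<in> T0"
  shows "Splus T0 S (fscale c x) = c * Splus T0 S x"
proof -
  have nonneg: "Splus T0 S (fscale c x) = c * Splus T0 S x" if "0 \<le> c" "x \<in> T0" for c x
    using that P_fscale pos_part_mem neg_part_mem
    by (simp add: Splus_def fneg_fscale sup_fscale_fzero right_diff_distrib)
  show ?thesis
  proof (cases "0 \<le> c")
    case False
    then show ?thesis
      using nonneg[of "- c" "fneg x"] x fneg_mem by (simp add: fscale_neg[of c] Splus_fneg)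
  qed (use nonneg x in simp)
qed

lemma Splus_linear: "linear_on T0 (Splus T0 S)"
  by (simp add: linear_on_def Splus_fadd Splus_fscale)

lemma P_tendsto_zero:
  assumes xs: "\<And>n. xs n \<in> T0" and dec: "decr_to_zero xs"
  shows "(\<lambda>n. P (xs n)) \<longlonglongrightarrow> 0"
proof (rule LIMSEQ_I)
  fix e :: real assume e: "0 < e"
  define x where "x = xs 0"
  define z where "z n = fsub x (xs n)" for n
  have xs_nn: "xs n \<in> nonneg_part T0" for n
    using xs decr_to_zero_nonneg[OF dec] by (simp add: nonneg_partI)
  have x_nn: "x \<in> nonneg_part T0"
    using xs_nn by (simp add: x_def)
  have pointwise: "0 \<le> xs n t" "xs n t \<le> x t" for n t
    using decr_to_zero_nonneg[OF dec] decr_to_zero_le_first[OF dec]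
    by (auto simp: x_def fzero_def le_fun_def)
  have z_nn: "z n \<in> nonneg_part T0" for n
  proof (rule nonneg_partI)
    show "z n \<in> T0"
      using xs_nn x_nn by (simp add: nonneg_part_def z_def fsub_mem)
    show "fzero \<le> z n"
      using eadd_uminus_nonneg_cancel[OF pointwise]
      by (simp add: z_def fsub_def fadd_def fneg_def fzero_def le_fun_def)
  qed
  have x_split: "fadd (xs n) (z n) = x" for n
    using eadd_uminus_nonneg_cancel[OF pointwise]
    by (simp add: fun_eq_iff z_def fsub_def fadd_def fneg_def)
  obtain y where y: "y \<in> T0" "fzero \<le> y" "y \<le> x" "P x - e < S y"
    using P_approx[OF x_nn e] .
  have "(\<lambda>n. S (inf y (xs n))) \<longlonglongrightarrow> 0"
    by (rule S_tendsto_zero[OF inf_mem[OF y(1) xs] decr_to_zero_inf[OF dec y(2)]])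
  then obtain N where N: "\<And>n. n \<ge> N \<Longrightarrow> \<bar>S (inf y (xs n))\<bar> < S y - (P x - e)"
    using LIMSEQ_D[of _ 0 "S y - (P x - e)"] y(4) by force
  have "P (xs n) < e" if "n \<ge> N" for n
  proof -
    have "S y \<le> S (inf y (xs n)) + P (z n)"
      using S_le_S_inf_add_P[OF xs_nn z_nn y(1,2)] y(3) x_split by simp
    moreover have "P x = P (xs n) + P (z n)"
      using P_fadd[OF xs_nn z_nn, of n n] x_split[of n] by simp
    ultimately show ?thesis
      using N[OF that] by simp
  qed
  then show "\<exists>N. \<forall>n\<ge>N. norm (P (xs n) - 0) < e"
    using P_nonneg[OF xs_nn] by auto
qed

lemma Splus_I_integral: "I_integral T0 (Splus T0 S)"
  unfolding I_integral_def
proof (intro conjI allI impI ballI)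
  show "linear_on T0 (Splus T0 S)"
    by (rule Splus_linear)
  show "0 \<le> Splus T0 S x" if "x \<in> T0" "fzero \<le> x" for x
    using that by (simp add: nonneg_partI Splus_nonneg_part P_nonneg)
  show "(\<lambda>n. Splus T0 S (xs n)) \<longlonglongrightarrow> 0" if "(\<forall>n. xs n \<in> T0) \<and> decr_to_zero xs" for xs
  proof -
    have "Splus T0 S (xs n) = P (xs n)" for n
      using that decr_to_zero_nonneg[of xs n] by (simp add: nonneg_partI Splus_nonneg_part)
    then show ?thesis
      using that P_tendsto_zero by simp
  qed
qed

lemma Sminus_I_integral: "I_integral T0 (Sminus T0 S)"
proof -
  have "I_integral T0 (\<lambda>x. Splus T0 S x - S x)"
    using Splus_I_integral S_linear
    by (rule I_integral_diff)
      (simp_all add: S_tendsto_zero nonneg_partI Splus_nonneg_part S_le_P_self)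
  then show ?thesis
    by (simp add: Sminus_def[abs_def])
qed

lemma Sabs_I_integral: "I_integral T0 (Sabs T0 S)"
  using I_integral_add[OF Splus_I_integral Sminus_I_integral] by (simp add: Sabs_def[abs_def])

end

theorem mainTheorem17:
  fixes T0 :: "('a \<Rightarrow> ereal) set" and S :: "('a \<Rightarrow> ereal) \<Rightarrow> real"
  assumes "ext_vector_lattice T0"
    and "S_integral T0 S"
  shows "(\<forall>x\<in>nonneg_part T0. bdd_above {S \<phi> | \<phi>. \<phi> \<in> T0 \<and> fzero \<le> \<phi> \<and> \<phi> \<le> x})
    \<and> (\<forall>x1\<in>nonneg_part T0. \<forall>x2\<in>nonneg_part T0.
          Ppart T0 S (fadd x1 x2) = Ppart T0 S x1 + Ppart T0 S x2)
    \<and> (\<forall>x\<in>T0. \<forall>\<phi>\<in>nonneg_part T0. \<forall>\<psi>\<in>nonneg_part T0.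
          x = fsub \<phi> \<psi> \<longrightarrow> Splus T0 S x = Ppart T0 S \<phi> - Ppart T0 S \<psi>)
    \<and> I_integral T0 (Splus T0 S)
    \<and> I_integral T0 (Sminus T0 S)
    \<and> I_integral T0 (Sabs T0 S)
    \<and> (\<forall>x\<in>T0. S x = Splus T0 S x - Sminus T0 S x)"
proof -
  interpret S_integral_on_lattice T0 S
    using assms by unfold_locales
  show ?thesis
    by (intro conjI ballI impI bdd_above_S_interval P_fadd Splus_fsub
        Splus_I_integral Sminus_I_integral Sabs_I_integral) (simp_all add: Sminus_def)
qed

end
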